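(* Let $\alpha>0$, $\gamma\in(0,1)$ and let $P$ be any distribution on $\mathcal X$. Given data $x_1,\dots,x_n$ with histogram $\theta=(\theta_1,\dots,\theta_k)$, let $S=\{j:\theta_j=0\}$ and define the random vector $Z=(z_1,\dots,z_k)$ by $$z_j=\begin{cases}\theta_j & \text{if } j\in S \text{ and } 2k\le\gamma n,\\ \theta_j+\frac{2}{n\alpha}L_j & \text{otherwise,}\end{cases}$$ where $L_1,\dots,L_k$ are i.i.d. Laplace random variables with mean zero and rate one (density $\tfrac12 e^{-|x|}$), independent of the data. Then this release mechanism is $(\alpha,\gamma)$-randomly differentially private with respect to $P$.
   Context: The sample space $\mathcal X$ is partitioned into $k$ cells $B_1,\dots,B_k$; the histogram of $x_1,\dots,x_n$ is $\theta_j=\frac1n\sum_{i=1}^n\mathbf 1\{x_i\in B_j\}$. A randomized algorithm $Q_n$ assigns to each database $X\in\mathcal X^n$ a distribution $Q_n(\cdot\mid X)$ on an output space (here $\mathbb R^k$). $Q_n$ is $(\alpha,\gamma)$-randomly differentially private (RDP) with respect to $P$ if, with $X_1,\dots,X_{n+1}$ i.i.d. $\sim P$, $X=(X_1,\dots,X_{n-1},X_n)$ and $X'=(X_1,\dots,X_{n-1},X_{n+1})$, $$\mathbb P\Big(\forall \text{ measurable } B:\ e^{-\alpha}\le \tfrac{Q_n(Z\in B\mid X)}{Q_n(Z\in B\mid X')}\le e^\alpha\Big)\ge 1-\gamma,$$ the probability being over $P^{n+1}$. *)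

theory Defs
  imports "HOL-Probability.Probability"
begin

text \<open>Cells B_1..B_k are encoded by a cell-index function cell :: 'a => nat with values in
  {0..<k}: B_(j+1) = {x. cell x = j}.  A database of size n is a function X :: nat => 'a,
  whose entries are X 0, ..., X (n-1).\<close>

definition histogram :: "('a \<Rightarrow> nat) \<Rightarrow> nat \<Rightarrow> (nat \<Rightarrow> 'a) \<Rightarrow> nat \<Rightarrow> real" where
  "histogram cell n X j = real (card {i \<in> {..<n}. cell (X i) = j}) / real n"

definition laplace :: "real measure" where
  "laplace = density lborel (\<lambda>x. ennreal (exp (- \<bar>x\<bar>) / 2))"

text \<open>The release mechanism Q_n(. | X): a distribution on R^k, represented as the
  product measure on {..<k} -> real; coordinates are independent.\<close>
definition hist_mech ::
  "('a \<Rightarrow> nat) \<Rightarrow> nat \<Rightarrow> nat \<Rightarrow> real \<Rightarrow> real \<Rightarrow> (nat \<Rightarrow> 'a) \<Rightarrow> (nat \<Rightarrow> real) measure" where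
  "hist_mech cell k n \<alpha> \<gamma> X =
     PiM {..<k} (\<lambda>j. if histogram cell n X j = 0 \<and> 2 * real k \<le> \<gamma> * real n
                      then return lborel (histogram cell n X j)
                      else distr laplace lborel
                             (\<lambda>l. histogram cell n X j + 2 / (real n * \<alpha>) * l))"

text \<open>(alpha,gamma)-random differential privacy w.r.t. P.  The draw X_1..X_(n+1) is
  omega 0, ..., omega n under P^(n+1); X = (omega 0,...,omega (n-1)) and
  X' = (omega 0,...,omega (n-2), omega n).  The ratio condition is written in multiplicative
  form (0/0 is treated as satisfying the bounds).\<close>
definition RDP ::
  "'a measure \<Rightarrow> nat \<Rightarrow> 'b measure \<Rightarrow> ((nat \<Rightarrow> 'a) \<Rightarrow> 'b measure) \<Rightarrow> real \<Rightarrow> real \<Rightarrow> bool" where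
  "RDP P n Out Q \<alpha> \<gamma> \<longleftrightarrow>
     measure (PiM {..n} (\<lambda>_. P))
       {\<omega> \<in> space (PiM {..n} (\<lambda>_. P)).
          \<forall>B \<in> sets Out.
            exp (- \<alpha>) * measure (Q (restrict (fun_upd \<omega> (n - 1) (\<omega> n)) {..<n})) B
               \<le> measure (Q (restrict \<omega> {..<n})) B \<and>
            measure (Q (restrict \<omega> {..<n})) B
               \<le> exp \<alpha> * measure (Q (restrict (fun_upd \<omega> (n - 1) (\<omega> n)) {..<n})) B}
     \<ge> 1 - \<gamma>"

end

theory Submission
  imports Defs
begin

text \<open>Replacing the last record changes at most two histogram cells, each by \<open>1/n\<close>, so the
  histogram has \<open>\<ell>\<^sub>1\<close>-sensitivity \<open>2/n\<close>; on the noised coordinates the density ratio of the two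
  output laws is at most \<open>exp (\<Sum>\<^sub>j |\<theta>\<^sub>j - \<theta>'\<^sub>j| / s) \<le> e\<^sup>\<alpha>\<close> for the noise scale \<open>s = 2/(n\<alpha>)\<close>.
  The only danger is a changed cell that is empty in one of the two databases and therefore
  released without noise.  When \<open>2k \<le> \<gamma>n\<close>, this requires the cell of one of the two swapped records
  to be missed by the other \<open>n - 1\<close> records, which by a union bound over the \<open>k\<close> cells has
  probability at most \<open>2k/n \<le> \<gamma>\<close>.\<close>

lemma sets_laplace [simp, measurable_cong]: "sets laplace = sets borel"
  by (simp add: laplace_def)

lemma prob_space_laplace: "prob_space laplace"
proof
  let ?e = "exponential_density (1::real)"
  have int_e: "(\<integral>\<^sup>+ x. ennreal (?e x) \<partial>lborel) = 1"
    using prob_space.emeasure_space_1[OF prob_space_exponential_density[of 1]]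
    by (simp add: emeasure_density)
  have int_e_reflected: "(\<integral>\<^sup>+ x. ennreal (?e (- x)) \<partial>lborel) = 1"
    using int_e by (subst lborel_distr_uminus[symmetric]) (simp add: nn_integral_distr)
  have split: "ennreal (exp (- \<bar>x\<bar>) / 2) = (ennreal (?e x) + ennreal (?e (- x))) / 2"
    if "x \<noteq> 0" for x :: real
    using that by (cases "x < 0") (simp_all add: exponential_density_def ennreal_divide_numeral)
  have "emeasure laplace (space laplace) = (\<integral>\<^sup>+ x. ennreal (exp (- \<bar>x\<bar>) / 2) \<partial>lborel)"
    by (simp add: laplace_def emeasure_density)
  also have "\<dots> = (\<integral>\<^sup>+ x. (ennreal (?e x) + ennreal (?e (- x))) / 2 \<partial>lborel)"
    by (intro nn_integral_cong_AE eventually_mono[OF AE_lborel_singleton[of 0]]) (simp add: split)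
  also have "\<dots> = 1"
    by (simp add: nn_integral_divide nn_integral_add int_e int_e_reflected one_add_one[symmetric] del: one_add_one)
  finally show "emeasure laplace (space laplace) = 1" .
qed

lemma distr_laplace_affine:
  assumes s: "s > 0"
  shows "distr laplace lborel (\<lambda>l. a + s * l) = density lborel (\<lambda>x. ennreal (exp (- \<bar>x - a\<bar> / s) / (2 * s)))"
proof -
  interpret prob_space laplace by (rule prob_space_laplace)
  have "distributed laplace lborel (\<lambda>x. x) (\<lambda>x. ennreal (exp (- \<bar>x\<bar>) / 2))"
    by (simp add: distributed_def distr_id2 laplace_def)
  from distributed_affine[OF this, of s a] s
  have "distr laplace lborel (\<lambda>x. a + s * x)
      = density lborel (\<lambda>x. ennreal (exp (- \<bar>(x - a) / s\<bar>) / 2) / ennreal s)"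
    by (simp add: distributed_def)
  also have "\<dots> = density lborel (\<lambda>x. ennreal (exp (- \<bar>x - a\<bar> / s) / (2 * s)))"
    using s by (simp add: divide_ennreal abs_divide mult.commute)
  finally show ?thesis .
qed

lemma density_distr_laplace_affine_recentre:
  assumes s: "s > 0"
  shows "density (distr laplace lborel (\<lambda>l. a + s * l)) (\<lambda>x. ennreal (exp ((\<bar>x - a\<bar> - \<bar>x - b\<bar>) / s)))
     = distr laplace lborel (\<lambda>l. b + s * l)"
proof -
  have "exp (- \<bar>x - a\<bar> / s) / (2 * s) * exp ((\<bar>x - a\<bar> - \<bar>x - b\<bar>) / s)
      = exp (- \<bar>x - b\<bar> / s) / (2 * s)" for x
    by (simp add: diff_divide_distrib flip: exp_add)
  then show ?thesis
    unfolding distr_laplace_affine[OF s] using s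
    by (subst density_density_eq) (auto simp flip: ennreal_mult)
qed

lemma indicator_PiE_eq_prod:
  assumes "finite I" "x \<in> extensional I"
  shows "indicator (Pi\<^sub>E I A) x = (\<Prod>i\<in>I. indicator (A i) (x i) :: 'b::comm_semiring_1)"
  using assms by (auto simp: indicator_def PiE_iff intro!: prod_zero)

lemma PiM_density:
  assumes I: "finite I" and M: "\<And>i. prob_space (M i)"
    and N: "\<And>i. prob_space (density (M i) (h i))"
    and h[measurable]: "\<And>i. h i \<in> borel_measurable (M i)"
  shows "PiM I (\<lambda>i. density (M i) (h i)) = density (PiM I M) (\<lambda>x. \<Prod>i\<in>I. h i (x i))"
proof -
  interpret M: product_prob_space M by (rule product_prob_spaceI[OF M])
  interpret N: product_prob_space "\<lambda>i. density (M i) (h i)" by (rule product_prob_spaceI[OF N])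
  have prod_h[measurable]: "(\<lambda>x. \<Prod>i\<in>I. h i (x i)) \<in> borel_measurable (PiM I M)"
    by measurable
  show ?thesis
  proof (rule N.PiM_eqI[symmetric, OF I])
    show "sets (density (PiM I M) (\<lambda>x. \<Prod>i\<in>I. h i (x i))) = sets (PiM I (\<lambda>i. density (M i) (h i)))"
      by (simp only: sets_density) (rule sets_PiM_cong; simp)
  next
    fix A assume "\<And>i. i \<in> I \<Longrightarrow> A i \<in> sets (density (M i) (h i))"
    then have A[measurable]: "\<And>i. i \<in> I \<Longrightarrow> A i \<in> sets (M i)" by simp
    have "emeasure (density (PiM I M) (\<lambda>x. \<Prod>i\<in>I. h i (x i))) (Pi\<^sub>E I A)
        = (\<integral>\<^sup>+ x. (\<Prod>i\<in>I. h i (x i)) * indicator (Pi\<^sub>E I A) x \<partial>PiM I M)"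
      using I by (intro emeasure_density) auto
    also have "\<dots> = (\<integral>\<^sup>+ x. (\<Prod>i\<in>I. h i (x i) * indicator (A i) (x i)) \<partial>PiM I M)"
      using I by (intro nn_integral_cong)
        (simp add: indicator_PiE_eq_prod space_PiM PiE_iff prod.distrib)
    also have "\<dots> = (\<Prod>i\<in>I. \<integral>\<^sup>+ y. h i y * indicator (A i) y \<partial>M i)"
      using I by (intro M.product_nn_integral_prod) auto
    also have "\<dots> = (\<Prod>i\<in>I. emeasure (density (M i) (h i)) (A i))"
      by (intro prod.cong refl) (simp add: emeasure_density)
    finally show "emeasure (density (PiM I M) (\<lambda>x. \<Prod>i\<in>I. h i (x i))) (Pi\<^sub>E I A)
        = (\<Prod>i\<in>I. emeasure (density (M i) (h i)) (A i))" .
  qed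
qed

definition release_coord :: "real \<Rightarrow> bool \<Rightarrow> real \<Rightarrow> real measure" where
  "release_coord s t v = (if v = 0 \<and> t then return lborel v else distr laplace lborel (\<lambda>l. v + s * l))"

lemma sets_release_coord [simp, measurable_cong]: "sets (release_coord s t v) = sets borel"
  by (simp add: release_coord_def)

lemma prob_space_release_coord: "prob_space (release_coord s t v)"
  using prob_space_laplace
  by (auto simp: release_coord_def intro!: prob_space_return prob_space.prob_space_distr)

lemma measure_density_le:
  assumes M: "finite_measure M" and f[measurable]: "f \<in> borel_measurable M"
    and bound: "\<And>x. x \<in> space M \<Longrightarrow> f x \<le> ennreal c" and c: "0 \<le> c" and B: "B \<in> sets M"
  shows "measure (density M f) B \<le> c * measure M B"
proof -
  interpret finite_measure M by (rule M)
  have "emeasure (density M f) B = (\<integral>\<^sup>+ x. f x * indicator B x \<partial>M)"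
    by (rule emeasure_density[OF f B])
  also have "\<dots> \<le> (\<integral>\<^sup>+ x. ennreal c * indicator B x \<partial>M)"
    using bound by (intro nn_integral_mono mult_right_mono) auto
  also have "\<dots> = ennreal (c * measure M B)"
    using B c by (simp add: nn_integral_cmult_indicator emeasure_eq_measure ennreal_mult)
  finally show ?thesis
    unfolding measure_def[of "density M f"] using c by (intro enn2real_leI) auto
qed

lemma density_release_coord:
  assumes s: "s > 0" and noised: "v \<noteq> v' \<Longrightarrow> \<not> (v = 0 \<and> t) \<and> \<not> (v' = 0 \<and> t)"
  shows "density (release_coord s t v) (\<lambda>x. ennreal (exp ((\<bar>x - v\<bar> - \<bar>x - v'\<bar>) / s))) = release_coord s t v'"
proof (cases "v = v'")
  case True
  then show ?thesis by (simp add: density_1)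
next
  case False
  then show ?thesis
    using noised density_distr_laplace_affine_recentre[OF s, of v v'] by (auto simp: release_coord_def)
qed

lemma measure_PiM_release_coord_le:
  fixes \<theta> \<theta>' :: "nat \<Rightarrow> real"
  assumes s: "s > 0"
    and noised: "\<And>j. j < k \<Longrightarrow> \<theta> j \<noteq> \<theta>' j \<Longrightarrow> \<not> (\<theta> j = 0 \<and> t) \<and> \<not> (\<theta>' j = 0 \<and> t)"
    and sensitivity: "(\<Sum>j<k. \<bar>\<theta> j - \<theta>' j\<bar>) \<le> \<alpha> * s"
    and B: "B \<in> sets (PiM {..<k} (\<lambda>_. lborel))"
  shows "measure (PiM {..<k} (\<lambda>j. release_coord s t (\<theta>' j))) B
    \<le> exp \<alpha> * measure (PiM {..<k} (\<lambda>j. release_coord s t (\<theta> j))) B"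
proof -
  let ?M = "\<lambda>j. release_coord s t (\<theta> j)"
  let ?N = "\<lambda>j. release_coord s t (\<theta>' j)"
  \<comment> \<open>\<open>h j = 1\<close> outside \<open>{..<k}\<close>, so that every \<open>density (?M j) (h j)\<close> is a probability space.\<close>
  define h where "h j x = (if j < k then ennreal (exp ((\<bar>x - \<theta> j\<bar> - \<bar>x - \<theta>' j\<bar>) / s)) else 1)" for j x
  have h_measurable[measurable]: "h j \<in> borel_measurable (?M j)" for j
    unfolding h_def[abs_def] by (subst measurable_cong_sets[OF sets_release_coord refl]) measurable
  have density_h: "density (?M j) (h j) = ?N j" if "j < k" for j
    using that density_release_coord[OF s noised[OF that]] by (simp add: h_def[abs_def])
  have "PiM {..<k} ?N = PiM {..<k} (\<lambda>j. density (?M j) (h j))"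
    by (intro PiM_cong) (simp_all add: density_h)
  also have "\<dots> = density (PiM {..<k} ?M) (\<lambda>x. \<Prod>j<k. h j (x j))"
  proof (rule PiM_density)
    show "prob_space (density (?M j) (h j))" for j
      using density_h[of j] prob_space_release_coord
      by (cases "j < k") (simp_all add: h_def[abs_def] density_1)
  qed (simp_all add: prob_space_release_coord)
  finally have N_density: "PiM {..<k} ?N = density (PiM {..<k} ?M) (\<lambda>x. \<Prod>j<k. h j (x j))" .
  have h_bounded: "(\<Prod>j<k. h j (x j)) \<le> ennreal (exp \<alpha>)" for x
  proof -
    have "(\<Sum>j<k. (\<bar>x j - \<theta> j\<bar> - \<bar>x j - \<theta>' j\<bar>) / s) \<le> (\<Sum>j<k. \<bar>\<theta> j - \<theta>' j\<bar>) / s"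
      using s by (simp add: sum_divide_distrib divide_right_mono sum_mono)
    also have "\<dots> \<le> \<alpha>"
      using sensitivity s by (simp add: pos_divide_le_eq)
    finally show ?thesis
      by (simp add: h_def prod_ennreal flip: exp_sum)
  qed
  interpret M: prob_space "PiM {..<k} ?M"
    by (rule prob_space_PiM[OF prob_space_release_coord])
  have B_M: "B \<in> sets (PiM {..<k} ?M)"
    using B by (subst sets_PiM_cong[OF refl]) auto
  show ?thesis
    unfolding N_density by (rule measure_density_le[OF M.finite_measure _ h_bounded exp_ge_zero B_M]) measurable
qed

definition indistinguishable :: "'b measure \<Rightarrow> real \<Rightarrow> 'b measure \<Rightarrow> 'b measure \<Rightarrow> bool" where
  "indistinguishable Out \<alpha> M N \<longleftrightarrow>
     (\<forall>B \<in> sets Out. exp (- \<alpha>) * measure N B \<le> measure M B \<and> measure M B \<le> exp \<alpha> * measure N B)"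

lemma RDP_iff_indistinguishable:
  "RDP P n Out Q \<alpha> \<gamma> \<longleftrightarrow>
     1 - \<gamma> \<le> measure (PiM {..n} (\<lambda>_. P))
       {\<omega> \<in> space (PiM {..n} (\<lambda>_. P)).
          indistinguishable Out \<alpha> (Q (restrict \<omega> {..<n})) (Q (restrict (fun_upd \<omega> (n - 1) (\<omega> n)) {..<n}))}"
  by (simp add: RDP_def indistinguishable_def)

lemma indistinguishable_PiM_release_coord:
  fixes \<theta> \<theta>' :: "nat \<Rightarrow> real"
  assumes s: "s > 0"
    and noised: "\<And>j. j < k \<Longrightarrow> \<theta> j \<noteq> \<theta>' j \<Longrightarrow> \<not> (\<theta> j = 0 \<and> t) \<and> \<not> (\<theta>' j = 0 \<and> t)"
    and sensitivity: "(\<Sum>j<k. \<bar>\<theta> j - \<theta>' j\<bar>) \<le> \<alpha> * s"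
  shows "indistinguishable (PiM {..<k} (\<lambda>_. lborel)) \<alpha>
    (PiM {..<k} (\<lambda>j. release_coord s t (\<theta> j))) (PiM {..<k} (\<lambda>j. release_coord s t (\<theta>' j)))"
  unfolding indistinguishable_def
proof (intro ballI conjI)
  fix B assume B: "B \<in> sets (PiM {..<k} (\<lambda>_. lborel :: real measure))"
  have "(\<Sum>j<k. \<bar>\<theta>' j - \<theta> j\<bar>) \<le> \<alpha> * s"
    using sensitivity by (simp add: abs_minus_commute)
  then show "measure (PiM {..<k} (\<lambda>j. release_coord s t (\<theta> j))) B
      \<le> exp \<alpha> * measure (PiM {..<k} (\<lambda>j. release_coord s t (\<theta>' j))) B"
    using noised by (intro measure_PiM_release_coord_le[OF s _ _ B]) auto
  have "measure (PiM {..<k} (\<lambda>j. release_coord s t (\<theta>' j))) B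
      \<le> exp \<alpha> * measure (PiM {..<k} (\<lambda>j. release_coord s t (\<theta> j))) B"
    using noised sensitivity by (rule measure_PiM_release_coord_le[OF s _ _ B])
  then show "exp (- \<alpha>) * measure (PiM {..<k} (\<lambda>j. release_coord s t (\<theta>' j))) B
      \<le> measure (PiM {..<k} (\<lambda>j. release_coord s t (\<theta> j))) B"
    by (simp add: exp_minus field_simps)
qed

lemma histogram_restrict: "histogram cell n (restrict X {..<n}) = histogram cell n X"
proof -
  have "{i \<in> {..<n}. cell (restrict X {..<n} i) = j} = {i \<in> {..<n}. cell (X i) = j}" for j
    by auto
  then show ?thesis by (simp add: fun_eq_iff histogram_def)
qed

lemma hist_mech_restrict: "hist_mech cell k n \<alpha> \<gamma> (restrict X {..<n}) = hist_mech cell k n \<alpha> \<gamma> X"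
  by (simp only: hist_mech_def histogram_restrict)

lemma hist_mech_eq_PiM_release_coord:
  "hist_mech cell k n \<alpha> \<gamma> X =
     PiM {..<k} (\<lambda>j. release_coord (2 / (real n * \<alpha>)) (2 * real k \<le> \<gamma> * real n) (histogram cell n X j))"
  by (simp add: hist_mech_def release_coord_def)

lemma histogram_comp: "histogram cell n X = histogram id n (cell \<circ> X)"
  by (simp add: fun_eq_iff histogram_def)

lemma hist_mech_comp: "hist_mech cell k n \<alpha> \<gamma> X = hist_mech id k n \<alpha> \<gamma> (cell \<circ> X)"
  by (simp only: hist_mech_def histogram_comp[of cell])

lemma histogram_pos:
  assumes "i < n" "cell (X i) = j"
  shows "histogram cell n X j > 0"
proof -
  have "i \<in> {i \<in> {..<n}. cell (X i) = j}" using assms by simp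
  then have "card {i \<in> {..<n}. cell (X i) = j} > 0" by (auto simp: card_gt_0_iff)
  then show ?thesis using assms by (simp add: histogram_def)
qed

lemma histogram_split_last:
  assumes "n \<ge> 1"
  shows "histogram cell n X j = (real (card {i \<in> {..<n - 1}. cell (X i) = j}) + of_bool (cell (X (n - 1)) = j)) / real n"
proof -
  have "{..<n} = insert (n - 1) {..<n - 1}" using assms by auto
  then have "{i \<in> {..<n}. cell (X i) = j}
      = (if cell (X (n - 1)) = j then insert (n - 1) else id) {i \<in> {..<n - 1}. cell (X i) = j}"
    by auto
  then show ?thesis by (simp add: histogram_def)
qed

lemma histogram_fun_upd_last_diff:
  assumes "n \<ge> 1"
  shows "histogram cell n X j - histogram cell n (X(n - 1 := x)) j
    = (of_bool (cell (X (n - 1)) = j) - of_bool (cell x = j)) / real n"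
proof -
  have "{i \<in> {..<n - 1}. cell ((X(n - 1 := x)) i) = j} = {i \<in> {..<n - 1}. cell (X i) = j}"
    by auto
  then show ?thesis
    using histogram_split_last[OF assms, of cell X] histogram_split_last[OF assms, of cell "X(n - 1 := x)"]
    by (simp add: of_bool_def flip: diff_divide_distrib)
qed

lemma sum_abs_histogram_fun_upd_last_le:
  assumes "n \<ge> 1"
  shows "(\<Sum>j<k. \<bar>histogram cell n X j - histogram cell n (X(n - 1 := x)) j\<bar>) \<le> 2 / real n"
proof -
  have "\<bar>histogram cell n X j - histogram cell n (X(n - 1 := x)) j\<bar>
      \<le> (of_bool (cell (X (n - 1)) = j) + of_bool (cell x = j)) / real n" for j
    unfolding histogram_fun_upd_last_diff[OF assms] by (simp add: abs_divide divide_right_mono)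
  then have "(\<Sum>j<k. \<bar>histogram cell n X j - histogram cell n (X(n - 1 := x)) j\<bar>)
      \<le> (\<Sum>j<k. (of_bool (cell (X (n - 1)) = j) + of_bool (cell x = j)) / real n)"
    by (rule sum_mono)
  also have "\<dots> = (card ({..<k} \<inter> {cell (X (n - 1))}) + card ({..<k} \<inter> {cell x})) / real n"
    by (simp add: sum_divide_distrib[symmetric] sum.distrib of_bool_def sum.If_cases)
  also have "\<dots> \<le> 2 / real n"
    by (intro divide_right_mono) (auto simp: Int_insert_right)
  finally show ?thesis .
qed

lemma indistinguishable_hist_mech_fun_upd_last:
  assumes n: "n \<ge> 1" and \<alpha>: "\<alpha> > 0"
    and seen: "2 * real k \<le> \<gamma> * real n \<Longrightarrow>
      (\<exists>i<n - 1. cell (X i) = cell (X (n - 1))) \<and> (\<exists>i<n - 1. cell (X i) = cell x)"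
  shows "indistinguishable (PiM {..<k} (\<lambda>_. lborel)) \<alpha>
    (hist_mech cell k n \<alpha> \<gamma> X) (hist_mech cell k n \<alpha> \<gamma> (X(n - 1 := x)))"
proof -
  let ?\<theta> = "histogram cell n X" and ?\<theta>' = "histogram cell n (X(n - 1 := x))"
  let ?t = "2 * real k \<le> \<gamma> * real n"
  have noised: "\<not> (?\<theta> j = 0 \<and> ?t) \<and> \<not> (?\<theta>' j = 0 \<and> ?t)" if "j < k" "?\<theta> j \<noteq> ?\<theta>' j" for j
  proof (cases ?t)
    case True
    have "j = cell (X (n - 1)) \<or> j = cell x"
      using that(2) histogram_fun_upd_last_diff[OF n, of cell X j x] by (auto simp: of_bool_def split: if_splits)
    then obtain i where i: "i < n - 1" "cell (X i) = j"
      using seen[OF True] by auto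
    then have "i < n" by linarith
    then have "?\<theta> j > 0" "?\<theta>' j > 0"
      using i histogram_pos[of i n cell X j] histogram_pos[of i n cell "X(n - 1 := x)" j] by auto
    then show ?thesis by simp
  qed simp
  have s: "2 / (real n * \<alpha>) > 0"
    using n \<alpha> by simp
  have sensitivity: "(\<Sum>j<k. \<bar>?\<theta> j - ?\<theta>' j\<bar>) \<le> \<alpha> * (2 / (real n * \<alpha>))"
    using sum_abs_histogram_fun_upd_last_le[OF n, of cell X x k] \<alpha> by simp
  show ?thesis
    unfolding hist_mech_eq_PiM_release_coord
    by (rule indistinguishable_PiM_release_coord[OF s _ sensitivity]) (fact noised)
qed

lemma sets_PiM_Collect_comp_countable:
  fixes f :: "'a \<Rightarrow> 'b::countable"
  assumes f[measurable]: "f \<in> M \<rightarrow>\<^sub>M count_space UNIV" and I: "finite I"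
  shows "{\<omega> \<in> space (PiM I (\<lambda>_. M)). Q (f \<circ> \<omega>)} \<in> sets (PiM I (\<lambda>_. M))"
proof -
  let ?g = "\<lambda>\<omega>. restrict (f \<circ> \<omega>) I"
  let ?C = "I \<rightarrow>\<^sub>E (UNIV :: 'b set)"
  have preimage: "?g -` {c} \<inter> space (PiM I (\<lambda>_. M)) = {\<omega> \<in> space (PiM I (\<lambda>_. M)). \<forall>i\<in>I. f (\<omega> i) = c i}"
    if "c \<in> ?C" for c
    using that by (auto simp: restrict_def fun_eq_iff PiE_def extensional_def)
  have g: "?g \<in> PiM I (\<lambda>_. M) \<rightarrow>\<^sub>M count_space ?C"
    unfolding measurable_count_space_eq_countable[OF countable_PiE[OF I countableI_type]]
    using I by (auto simp: preimage intro!: sets.sets_Collect_finite_All)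
  \<comment> \<open>On the space of the product, \<open>\<omega>\<close> is \<open>undefined\<close> outside \<open>I\<close>.\<close>
  have "f \<circ> \<omega> = (\<lambda>i. if i \<in> I then ?g \<omega> i else f undefined)" if "\<omega> \<in> space (PiM I (\<lambda>_. M))" for \<omega>
    using that by (auto simp: space_PiM PiE_def extensional_def)
  then have "{\<omega> \<in> space (PiM I (\<lambda>_. M)). Q (f \<circ> \<omega>)}
      = ?g -` {c \<in> ?C. Q (\<lambda>i. if i \<in> I then c i else f undefined)} \<inter> space (PiM I (\<lambda>_. M))"
    by auto
  also have "\<dots> \<in> sets (PiM I (\<lambda>_. M))"
    by (rule measurable_sets[OF g]) auto
  finally show ?thesis .
qed

lemma mult_power_one_minus_le:
  fixes p :: real
  assumes p: "0 \<le> p" "p \<le> 1"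
  shows "p * (1 - p) ^ m \<le> 1 / (real m + 1)"
proof -
  have "(1 - p) ^ m * (1 + real m * p) \<le> exp (- p) ^ m * exp (real m * p)"
    using p exp_ge_add_one_self[of "- p"] exp_ge_add_one_self[of "real m * p"]
    by (intro mult_mono power_mono) auto
  also have "\<dots> = 1"
    by (simp flip: exp_of_nat_mult exp_add)
  finally have "(1 - p) ^ m * (1 + real m * p) \<le> 1" .
  moreover have "p * (real m + 1) \<le> 1 + real m * p"
    using p by (simp add: algebra_simps)
  ultimately have "p * (1 - p) ^ m * (real m + 1) \<le> 1"
    using p mult_left_mono[of "p * (real m + 1)" "1 + real m * p" "(1 - p) ^ m"]
    by (simp add: mult_ac)
  then show ?thesis
    by (simp add: field_simps)
qed

lemma (in prob_space) measure_PiM_avoid_then_hit: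
  assumes E: "E \<in> events" and I: "finite I" and J: "J \<subseteq> I" and m: "m \<in> I - J"
  shows "measure (PiM I (\<lambda>_. M)) (Pi\<^sub>E I (\<lambda>i. if i \<in> J then space M - E else if i = m then E else space M))
    = prob E * (1 - prob E) ^ card J"
proof -
  interpret F: finite_product_prob_space "\<lambda>_. M" I
    using I by unfold_locales
  let ?F = "\<lambda>i. if i \<in> J then space M - E else if i = m then E else space M"
  have "measure (PiM I (\<lambda>_. M)) (Pi\<^sub>E I ?F) = (\<Prod>i\<in>I - J. prob (?F i)) * (\<Prod>i\<in>J. prob (?F i))"
    using E by (simp add: F.prob_times prod.subset_diff[OF J I])
  also have "(\<Prod>i\<in>I - J. prob (?F i)) = (\<Prod>i\<in>I - J. if i = m then prob E else 1)"
    by (intro prod.cong) (auto simp: prob_space)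
  also have "\<dots> = prob E"
    using I m by (simp add: prod.delta)
  also have "(\<Prod>i\<in>J. prob (?F i)) = (1 - prob E) ^ card J"
    using E by (simp add: prob_compl)
  finally show ?thesis .
qed

text \<open>Union bound over the \<open>k\<close> cells, each contributing \<open>p (1 - p)\<^sup>N \<le> 1 / (N + 1)\<close>.\<close>
lemma (in prob_space) measure_PiM_cell_unseen_le:
  fixes cell :: "'a \<Rightarrow> nat"
  assumes cell[measurable]: "cell \<in> M \<rightarrow>\<^sub>M count_space UNIV" and ck: "\<forall>x \<in> space M. cell x < k"
    and I: "finite I" and J: "J \<subseteq> I" and m: "m \<in> I - J"
  shows "measure (PiM I (\<lambda>_. M)) {\<omega> \<in> space (PiM I (\<lambda>_. M)). \<forall>i\<in>J. cell (\<omega> i) \<noteq> cell (\<omega> m)}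
    \<le> real k / (real (card J) + 1)"
proof -
  interpret PP: finite_product_prob_space "\<lambda>_. M" I
    using I by unfold_locales
  define E where "E j = {x \<in> space M. cell x = j}" for j
  have E[measurable]: "E j \<in> sets M" for j
    unfolding E_def by measurable
  define F where "F j i = (if i \<in> J then space M - E j else if i = m then E j else space M)" for j i
  have F: "F j i \<in> sets M" for j i
    unfolding F_def by auto
  have "{\<omega> \<in> space (PiM I (\<lambda>_. M)). \<forall>i\<in>J. cell (\<omega> i) \<noteq> cell (\<omega> m)} \<subseteq> (\<Union>j<k. Pi\<^sub>E I (F j))"
    using m ck by (force simp: space_PiM PiE_iff F_def E_def)
  then have "measure (PiM I (\<lambda>_. M)) {\<omega> \<in> space (PiM I (\<lambda>_. M)). \<forall>i\<in>J. cell (\<omega> i) \<noteq> cell (\<omega> m)}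
      \<le> measure (PiM I (\<lambda>_. M)) (\<Union>j<k. Pi\<^sub>E I (F j))"
    using F I by (intro PP.finite_measure_mono sets.finite_UN sets_PiM_I_finite) auto
  also have "\<dots> \<le> (\<Sum>j<k. measure (PiM I (\<lambda>_. M)) (Pi\<^sub>E I (F j)))"
    using F I by (intro measure_UNION_le sets_PiM_I_finite) auto
  also have "\<dots> = (\<Sum>j<k. prob (E j) * (1 - prob (E j)) ^ card J)"
    unfolding F_def using I J m by (simp add: measure_PiM_avoid_then_hit)
  also have "\<dots> \<le> (\<Sum>j<k. 1 / (real (card J) + 1))"
    by (intro sum_mono mult_power_one_minus_le) auto
  finally show ?thesis
    by simp
qed

lemma (in prob_space) measure_PiM_last_two_seen_ge:
  fixes cell :: "'a \<Rightarrow> nat"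
  assumes cell: "cell \<in> M \<rightarrow>\<^sub>M count_space UNIV" and ck: "\<forall>x \<in> space M. cell x < k"
    and n: "n \<ge> 1"
  shows "1 - 2 * real k / real n \<le> measure (PiM {..n} (\<lambda>_. M))
    {\<omega> \<in> space (PiM {..n} (\<lambda>_. M)).
       (\<exists>i<n - 1. cell (\<omega> i) = cell (\<omega> (n - 1))) \<and> (\<exists>i<n - 1. cell (\<omega> i) = cell (\<omega> n))}"
proof -
  let ?PP = "PiM {..n} (\<lambda>_. M)"
  interpret PP: prob_space ?PP
    by (rule prob_space_PiM) (rule prob_space_axioms)
  define unseen where "unseen m = {\<omega> \<in> space ?PP. \<forall>i\<in>{..<n - 1}. cell (\<omega> i) \<noteq> cell (\<omega> m)}" for m
  have unseen_sets: "unseen m \<in> sets ?PP" for m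
    using sets_PiM_Collect_comp_countable[OF cell, of "{..n}" "\<lambda>c. \<forall>i\<in>{..<n - 1}. c i \<noteq> c m"]
    by (simp add: unseen_def)
  have unseen_le: "measure ?PP (unseen m) \<le> real k / real n" if "m \<in> {n - 1, n}" for m
  proof -
    have J: "{..<n - 1} \<subseteq> {..n}" and m: "m \<in> {..n} - {..<n - 1}"
      and card: "real (card {..<n - 1}) + 1 = real n"
      using that n by auto
    show ?thesis
      using measure_PiM_cell_unseen_le[OF cell ck finite_atMost J m] unfolding unseen_def card .
  qed
  have "measure ?PP (unseen (n - 1) \<union> unseen n) \<le> measure ?PP (unseen (n - 1)) + measure ?PP (unseen n)"
    by (rule measure_Un_le[OF unseen_sets unseen_sets])
  also have "\<dots> \<le> 2 * real k / real n"
    using unseen_le[of "n - 1"] unseen_le[of n] by simp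
  moreover have "{\<omega> \<in> space ?PP.
       (\<exists>i<n - 1. cell (\<omega> i) = cell (\<omega> (n - 1))) \<and> (\<exists>i<n - 1. cell (\<omega> i) = cell (\<omega> n))}
      = space ?PP - (unseen (n - 1) \<union> unseen n)"
    by (auto simp: unseen_def)
  ultimately show ?thesis
    using PP.prob_compl[of "unseen (n - 1) \<union> unseen n"] unseen_sets by simp
qed

theorem proposition5p1:
  fixes P :: "'a measure" and cell :: "'a \<Rightarrow> nat" and k n :: nat and \<alpha> \<gamma> :: real
  assumes "prob_space P"
    and "cell \<in> P \<rightarrow>\<^sub>M count_space UNIV"
    and "\<forall>x \<in> space P. cell x < k"
    and "n \<ge> 1"
    and "\<alpha> > 0"
    and "0 < \<gamma>" and "\<gamma> < 1"
  shows "RDP P n (PiM {..<k} (\<lambda>_. lborel)) (hist_mech cell k n \<alpha> \<gamma>) \<alpha> \<gamma>"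
proof -
  interpret P: prob_space P by fact
  let ?PP = "PiM {..n} (\<lambda>_. P)" and ?Out = "PiM {..<k} (\<lambda>_. lborel) :: (nat \<Rightarrow> real) measure"
  interpret PP: prob_space ?PP by (rule prob_space_PiM) (rule assms(1))
  define good where "good c \<longleftrightarrow> indistinguishable ?Out \<alpha>
    (hist_mech id k n \<alpha> \<gamma> c) (hist_mech id k n \<alpha> \<gamma> (fun_upd c (n - 1) (c n)))" for c
  let ?t = "2 * real k \<le> \<gamma> * real n"
  let ?Seen = "{\<omega> \<in> space ?PP.
    (\<exists>i<n - 1. cell (\<omega> i) = cell (\<omega> (n - 1))) \<and> (\<exists>i<n - 1. cell (\<omega> i) = cell (\<omega> n))}"
  have "1 - \<gamma> \<le> measure ?PP (if ?t then ?Seen else space ?PP)"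
  proof (cases ?t)
    case True
    then have "2 * real k / real n \<le> \<gamma>"
      using assms(4) by (simp add: pos_divide_le_eq)
    then show ?thesis
      using True P.measure_PiM_last_two_seen_ge[OF assms(2-4)] by simp
  qed (use assms(6) PP.prob_space in simp)
  also have "\<dots> \<le> measure ?PP {\<omega> \<in> space ?PP. good (cell \<circ> \<omega>)}"
    using indistinguishable_hist_mech_fun_upd_last[OF assms(4,5), of k \<gamma> cell]
      sets_PiM_Collect_comp_countable[OF assms(2) finite_atMost[of n], of good]
    by (intro PP.finite_measure_mono) (auto simp: good_def hist_mech_comp[of cell] fun_upd_comp)
  finally show ?thesis
    by (simp add: RDP_iff_indistinguishable hist_mech_restrict good_def hist_mech_comp[of cell] fun_upd_comp)
qed

end
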